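(* For every message $M$ and formula $\phi$: $\vdash\langle M\rangle\phi\leftrightarrow\neg\neg[M]\phi$.
   Context: Fix a finite set $\mathcal{A}$ of agent names containing a distinguished name $\mathsf{CM}$. Messages: $M ::= a \mid B \mid (M,M)$ ($a\in\mathcal{A}$, $B$ optional data constants, pairs). $\mathcal{P}$ is a denumerable set of propositional variables containing atoms $\mathsf{k}_a(M)$ ("$a$ knows $M$"). Formulas: $\phi ::= P \mid \phi\wedge\phi \mid \phi\vee\phi \mid \neg\phi \mid \phi\to\phi \mid [M]\phi$. Abbreviations: $\mathrm{true}:=\mathsf{k}_{\mathsf{CM}}(\mathsf{CM})$, $\mathrm{false}:=\neg\mathrm{true}$, $\phi\leftrightarrow\psi:=(\phi\to\psi)\wedge(\psi\to\phi)$, $\langle M\rangle\phi:=\neg\neg(\mathsf{k}_{\mathsf{CM}}(M)\wedge\phi)$. LIiP is the smallest set of formulas containing all instances of: the axioms of an adequate Hilbert axiomatization of intuitionistic propositional logic; $\mathsf{k}_a(a)$; $(\mathsf{k}_a(M)\wedge\mathsf{k}_a(M'))\leftrightarrow\mathsf{k}_a((M,M'))$; $[M]\mathsf{k}_{\mathsf{CM}}(M)$; $[M](\phi\to\psi)\to([M]\phi\to[M]\psi)$; $[M]\phi\to(\mathsf{k}_{\mathsf{CM}}(M)\to\phi)$; $[M]\phi\to\langle M\rangle\phi$; $\phi\to[M]\phi$; and closed under modus ponens and the rule: if $\mathsf{k}_{\mathsf{CM}}(M)\to\mathsf{k}_{\mathsf{CM}}(M')$ is in the set then so is $[M']\phi\to[M]\phi$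 for every $\phi$. Write $\vdash\phi$ for $\phi\in\mathrm{LIiP}$. *)

theory Defs
  imports Main
begin

text \<open>Agent names: a finite type 'ag; the distinguished name CM is a parameter cm.
  Data constants: an arbitrary type 'd.\<close>

datatype ('ag, 'd) msg = Ag 'ag | Dat 'd | MPair "('ag, 'd) msg" "('ag, 'd) msg"

datatype ('ag, 'd) pvar = Know 'ag "('ag, 'd) msg" | PV nat

datatype ('ag, 'd) fm =
    Atom "('ag, 'd) pvar"
  | Conj "('ag, 'd) fm" "('ag, 'd) fm"
  | Disj "('ag, 'd) fm" "('ag, 'd) fm"
  | Neg "('ag, 'd) fm"
  | Imp "('ag, 'd) fm" "('ag, 'd) fm"
  | Box "('ag, 'd) msg" "('ag, 'd) fm"

definition k :: "'ag \<Rightarrow> ('ag, 'd) msg \<Rightarrow> ('ag, 'd) fm" where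
  "k a M = Atom (Know a M)"

definition tru :: "'ag \<Rightarrow> ('ag, 'd) fm" where
  "tru cm = k cm (Ag cm)"

definition fls :: "'ag \<Rightarrow> ('ag, 'd) fm" where
  "fls cm = Neg (tru cm)"

definition Iff :: "('ag, 'd) fm \<Rightarrow> ('ag, 'd) fm \<Rightarrow> ('ag, 'd) fm" where
  "Iff p q = Conj (Imp p q) (Imp q p)"

definition Dia :: "'ag \<Rightarrow> ('ag, 'd) msg \<Rightarrow> ('ag, 'd) fm \<Rightarrow> ('ag, 'd) fm" where
  "Dia cm M p = Neg (Neg (Conj (k cm M) p))"

text \<open>LIiP, relative to the distinguished agent cm. Intuitionistic propositional
  logic is axiomatized by Kleene's Hilbert system (negation primitive).\<close>
inductive LIiP :: "'ag \<Rightarrow> ('ag, 'd) fm \<Rightarrow> bool" for cm :: 'ag where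
  ax1: "LIiP cm (Imp p (Imp q p))"
| ax2: "LIiP cm (Imp (Imp p (Imp q r)) (Imp (Imp p q) (Imp p r)))"
| ax3: "LIiP cm (Imp (Conj p q) p)"
| ax4: "LIiP cm (Imp (Conj p q) q)"
| ax5: "LIiP cm (Imp p (Imp q (Conj p q)))"
| ax6: "LIiP cm (Imp p (Disj p q))"
| ax7: "LIiP cm (Imp q (Disj p q))"
| ax8: "LIiP cm (Imp (Imp p r) (Imp (Imp q r) (Imp (Disj p q) r)))"
| ax9: "LIiP cm (Imp (Imp p q) (Imp (Imp p (Neg q)) (Neg p)))"
| ax10: "LIiP cm (Imp (Neg p) (Imp p q))"
| know_self: "LIiP cm (k a (Ag a))"
| know_pair: "LIiP cm (Iff (Conj (k a M) (k a M')) (k a (MPair M M')))"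
| box_know: "LIiP cm (Box M (k cm M))"
| box_K: "LIiP cm (Imp (Box M (Imp p q)) (Imp (Box M p) (Box M q)))"
| box_T: "LIiP cm (Imp (Box M p) (Imp (k cm M) p))"
| box_dia: "LIiP cm (Imp (Box M p) (Dia cm M p))"
| box_intro: "LIiP cm (Imp p (Box M p))"
| mp: "LIiP cm (Imp p q) \<Longrightarrow> LIiP cm p \<Longrightarrow> LIiP cm q"
| mono: "LIiP cm (Imp (k cm M) (k cm M')) \<Longrightarrow> LIiP cm (Imp (Box M' p) (Box M p))"

end

theory Submission
  imports Defs
begin

text \<open>Since \<open>\<langle>M\<rangle>\<phi>\<close> is \<open>\<not>\<not>(k\<^sub>C\<^sub>M(M) \<and> \<phi>)\<close>, the forward direction is double negation
  applied to \<open>k\<^sub>C\<^sub>M(M) \<and> \<phi> \<rightarrow> \<phi> \<rightarrow> [M]\<phi>\<close>. Backwards, double negation applied to the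
  axiom \<open>[M]\<phi> \<rightarrow> \<langle>M\<rangle>\<phi>\<close> gives \<open>\<not>\<not>[M]\<phi> \<rightarrow> \<not>\<not>\<not>\<not>(k\<^sub>C\<^sub>M(M) \<and> \<phi>)\<close>, and four negations
  collapse to two intuitionistically.\<close>

lemma LIiP_imp_refl: "LIiP cm (Imp p p)"
proof -
  have "LIiP cm (Imp (Imp p (Imp (Imp p p) p)) (Imp (Imp p (Imp p p)) (Imp p p)))"
    by (rule ax2)
  then have "LIiP cm (Imp (Imp p (Imp p p)) (Imp p p))"
    using ax1 by (rule mp)
  then show ?thesis
    using ax1 by (rule mp)
qed

lemma LIiP_imp_weaken: "LIiP cm q \<Longrightarrow> LIiP cm (Imp p q)"
  by (rule mp[OF ax1])

lemma LIiP_imp_mp: "LIiP cm (Imp p (Imp q r)) \<Longrightarrow> LIiP cm (Imp p q) \<Longrightarrow> LIiP cm (Imp p r)"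
  by (rule mp[OF mp[OF ax2]])

lemma LIiP_imp_trans: "LIiP cm (Imp p q) \<Longrightarrow> LIiP cm (Imp q r) \<Longrightarrow> LIiP cm (Imp p r)"
  by (rule LIiP_imp_mp[OF LIiP_imp_weaken])

lemma LIiP_Iff_intro: "LIiP cm (Imp p q) \<Longrightarrow> LIiP cm (Imp q p) \<Longrightarrow> LIiP cm (Iff p q)"
  unfolding Iff_def by (rule mp[OF mp[OF ax5]])

lemma LIiP_contrapos: "LIiP cm (Imp p q) \<Longrightarrow> LIiP cm (Imp (Neg q) (Neg p))"
  by (rule LIiP_imp_trans[OF ax1 mp[OF ax9]])

lemma LIiP_notnot_mono: "LIiP cm (Imp p q) \<Longrightarrow> LIiP cm (Imp (Neg (Neg p)) (Neg (Neg q)))"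
  by (rule LIiP_contrapos[OF LIiP_contrapos])

lemma LIiP_notnot_intro: "LIiP cm (Imp p (Neg (Neg p)))"
proof -
  have "LIiP cm (Imp p (Imp (Imp (Neg p) p) (Imp (Imp (Neg p) (Neg p)) (Neg (Neg p)))))"
    by (rule LIiP_imp_weaken[OF ax9])
  moreover have "LIiP cm (Imp p (Imp (Neg p) p))"
    by (rule ax1)
  moreover have "LIiP cm (Imp p (Imp (Neg p) (Neg p)))"
    by (rule LIiP_imp_weaken[OF LIiP_imp_refl])
  ultimately show ?thesis
    by (rule LIiP_imp_mp[OF LIiP_imp_mp])
qed

lemma LIiP_notnot_notnot_elim: "LIiP cm (Imp (Neg (Neg (Neg (Neg p)))) (Neg (Neg p)))"
  by (rule LIiP_contrapos[OF LIiP_notnot_intro])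

lemma LIiP_Dia_imp_notnot_Box: "LIiP cm (Imp (Dia cm M p) (Neg (Neg (Box M p))))"
  unfolding Dia_def by (rule LIiP_notnot_mono[OF LIiP_imp_trans[OF ax4 box_intro]])

lemma LIiP_notnot_Box_imp_Dia: "LIiP cm (Imp (Neg (Neg (Box M p))) (Dia cm M p))"
  unfolding Dia_def
  by (rule LIiP_imp_trans[OF LIiP_notnot_mono[OF box_dia[unfolded Dia_def]]
        LIiP_notnot_notnot_elim])

theorem theorem2p58:
  fixes cm :: "'ag::finite" and M :: "('ag, 'd) msg" and \<phi> :: "('ag, 'd) fm"
  shows "LIiP cm (Iff (Dia cm M \<phi>) (Neg (Neg (Box M \<phi>))))"
  by (rule LIiP_Iff_intro[OF LIiP_Dia_imp_notnot_Box LIiP_notnot_Box_imp_Dia])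

end
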